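(* Let $V_\mathbb{C}$ be a complex vector space of dimension $d\ge7$ with a non-degenerate quadratic form $q$, and identify $\mathfrak{so}(V_\mathbb{C},q)$ with $\Lambda^2V_\mathbb{C}$. For $i=1,2$ let $L_i\subset V_\mathbb{C}$ be a 1-dimensional subspace and $0\ne u_i\in L_i^\perp$ with $q(u_i)=0$ and $\dim(L_i+\mathbb{C}u_i)=2$, and set $\mathfrak{r}(L_i,u_i)=u_i\wedge(L_i+\mathbb{C}u_i)^\perp$. If $\mathfrak{h}_\mathbb{C}\subset\mathfrak{so}(V_\mathbb{C},q)$ is a Lie subalgebra containing $\mathfrak{r}(L_1,u_1)$ and $\mathfrak{r}(L_2,u_2)$, then $u_1\wedge u_2\in\mathfrak{h}_\mathbb{C}$.
   Context: The identification $\Lambda^2V_\mathbb{C}\cong\mathfrak{so}(V_\mathbb{C},q)$ sends $v\wedge w$ to the endomorphism $x\mapsto q(x,w)v-q(x,v)w$; orthogonal complements are with respect to $q$. *)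

theory Defs
  imports "HOL-Analysis.Analysis"
begin

text \<open>The complex vector space V_C is complex^'n (dimension CARD('n)).
  The quadratic form q is given by its symmetric Gram matrix Q; its polar
  (symmetric bilinear) form is qf Q, and q(x) = qf Q x x.\<close>

definition qf :: "complex^'n^'n \<Rightarrow> complex^'n \<Rightarrow> complex^'n \<Rightarrow> complex" where
  "qf Q x y = (\<Sum>i\<in>UNIV. \<Sum>j\<in>UNIV. x$i * Q$i$j * y$j)"

definition nondegenerate :: "complex^'n^'n \<Rightarrow> bool" where
  "nondegenerate Q \<longleftrightarrow> transpose Q = Q \<and> (\<forall>x. (\<forall>y. qf Q x y = 0) \<longrightarrow> x = 0)"

definition so_alg :: "complex^'n^'n \<Rightarrow> (complex^'n^'n) set" where
  "so_alg Q = {A. \<forall>x y. qf Q (A *v x) y + qf Q x (A *v y) = 0}"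

text \<open>v \<wedge> w is the endomorphism x \<mapsto> q(x,w) v - q(x,v) w.\<close>
definition wedge :: "complex^'n^'n \<Rightarrow> complex^'n \<Rightarrow> complex^'n \<Rightarrow> complex^'n^'n" where
  "wedge Q v w = (\<chi> i k. v$i * (\<Sum>j\<in>UNIV. Q$k$j * w$j) - w$i * (\<Sum>j\<in>UNIV. Q$k$j * v$j))"


definition perp :: "complex^'n^'n \<Rightarrow> (complex^'n) set \<Rightarrow> (complex^'n) set" where
  "perp Q S = {w. \<forall>s\<in>S. qf Q s w = 0}"

definition cline :: "complex^'n \<Rightarrow> (complex^'n) set" where
  "cline v = {c *s v | c. True}"

definition set_plus_vec :: "(complex^'n) set \<Rightarrow> (complex^'n) set \<Rightarrow> (complex^'n) set" where
  "set_plus_vec A B = {a + b | a b. a \<in> A \<and> b \<in> B}"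

definition is_line :: "(complex^'n) set \<Rightarrow> bool" where
  "is_line L \<longleftrightarrow> (\<exists>l. l \<noteq> 0 \<and> L = cline l)"

text \<open>dim (L + C u) = 2, for L = C l: l, u linearly independent over C.\<close>
definition cindep2 :: "complex^'n \<Rightarrow> complex^'n \<Rightarrow> bool" where
  "cindep2 a b \<longleftrightarrow> (\<forall>s t. s *s a + t *s b = 0 \<longrightarrow> s = 0 \<and> t = 0)"

definition dim_is_2 :: "(complex^'n) set \<Rightarrow> bool" where
  "dim_is_2 W \<longleftrightarrow> (\<exists>a b. cindep2 a b \<and> W = set_plus_vec (cline a) (cline b))"

definition r_alg :: "complex^'n^'n \<Rightarrow> (complex^'n) set \<Rightarrow> complex^'n \<Rightarrow> (complex^'n^'n) set" where
  "r_alg Q L u = {wedge Q u w | w. w \<in> perp Q (set_plus_vec L (cline u))}"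

definition lie_subalg :: "complex^'n^'n \<Rightarrow> (complex^'n^'n) set \<Rightarrow> bool" where
  "lie_subalg Q H \<longleftrightarrow> H \<subseteq> so_alg Q \<and> 0 \<in> H \<and>
     (\<forall>A\<in>H. \<forall>B\<in>H. A + B \<in> H) \<and> (\<forall>c. \<forall>A\<in>H. (\<chi> i j. c * A$i$j) \<in> H) \<and>
     (\<forall>A\<in>H. \<forall>B\<in>H. A ** B - B ** A \<in> H)"

end

theory Submission
  imports Defs
begin

text \<open>For w orthogonal to L1, u1, u2 and w' orthogonal to L2, u1, u2, both u1 \<wedge> w and
  u2 \<wedge> w' lie in H, and their bracket is -q(w,w') u1 \<wedge> u2 - q(u1,u2) w \<wedge> w'.
  If q(u1,u2) = 0 it suffices to find such w, w' with q(w,w') \<noteq> 0: otherwise a space of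
  dimension at least d - 3 would lie in the orthogonal complement of another space of dimension
  at least d - 3, forcing d \<le> 6. If q(u1,u2) \<noteq> 0, take w = w' anisotropic and orthogonal
  to L1, L2, u1, u2; these w form a space of dimension at least d - 4, and if it were totally
  isotropic then it and the hyperbolic plane spanned by u1, u2 would be independent subspaces
  of its orthogonal complement, forcing 2(d - 4) + 2 \<le> d.\<close>

lemma qf_eq_sum_matrix_vector_mult: "qf Q x y = (\<Sum>i\<in>UNIV. x$i * (Q *v y)$i)"
  by (simp add: qf_def matrix_vector_mult_def sum_distrib_left mult.assoc)

lemma qf_add_left: "qf Q (x + y) z = qf Q x z + qf Q y z"
  by (simp add: qf_eq_sum_matrix_vector_mult distrib_right sum.distrib)

lemma qf_scale_left: "qf Q (c *s x) z = c * qf Q x z"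
  by (simp add: qf_eq_sum_matrix_vector_mult sum_distrib_left mult.assoc)

lemma qf_add_right: "qf Q x (y + z) = qf Q x y + qf Q x z"
  by (simp add: qf_def distrib_left sum.distrib)

lemma qf_scale_right: "qf Q x (c *s y) = c * qf Q x y"
  by (simp add: qf_def sum_distrib_left mult_ac)

lemma qf_diff_right: "qf Q x (y - z) = qf Q x y - qf Q x z"
  by (simp add: qf_def right_diff_distrib sum_subtractf)

lemma qf_commute:
  assumes "transpose Q = Q"
  shows "qf Q x y = qf Q y x"
proof -
  have "Q$i$j = Q$j$i" for i j
    using assms by (metis transpose_def vec_lambda_beta)
  then show ?thesis
    unfolding qf_def by (subst sum.swap) (simp add: mult.commute mult.left_commute)
qed

lemma qf_zero_left [simp]: "qf Q 0 y = 0"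
  by (simp add: qf_def)

lemma qf_zero_right [simp]: "qf Q x 0 = 0"
  by (simp add: qf_def)

lemma perpI: "(\<And>s. s \<in> S \<Longrightarrow> qf Q s w = 0) \<Longrightarrow> w \<in> perp Q S"
  by (simp add: perp_def)

lemma subspace_perp: "vec.subspace (perp Q S)"
  unfolding vec.subspace_def perp_def by (simp add: qf_add_right qf_scale_right)

lemma perp_antimono: "S \<subseteq> T \<Longrightarrow> perp Q T \<subseteq> perp Q S"
  by (auto simp: perp_def)

lemma perp_span: "perp Q (vec.span S) = perp Q S"
proof
  show "perp Q (vec.span S) \<subseteq> perp Q S"
    by (rule perp_antimono) (rule vec.span_superset)
  show "perp Q S \<subseteq> perp Q (vec.span S)"
  proof
    fix w assume w: "w \<in> perp Q S"
    have "vec.subspace {s. qf Q s w = 0}"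
      unfolding vec.subspace_def by (simp add: qf_add_left qf_scale_left)
    moreover have "S \<subseteq> {s. qf Q s w = 0}"
      using w by (auto simp: perp_def)
    ultimately have "vec.span S \<subseteq> {s. qf Q s w = 0}"
      using vec.span_minimal by blast
    then show "w \<in> perp Q (vec.span S)"
      by (auto simp: perp_def)
  qed
qed

lemma perp_UNIV:
  assumes "nondegenerate Q"
  shows "perp Q UNIV = {0}"
proof -
  have "w = 0" if "w \<in> perp Q UNIV" for w
  proof -
    have "\<forall>y. qf Q w y = 0"
      using that assms qf_commute[of Q w] unfolding perp_def nondegenerate_def by auto
    then show ?thesis
      using assms unfolding nondegenerate_def by blast
  qed
  then show ?thesis
    by (auto simp: perp_def qf_def)
qed

lemma perp_commute:
  assumes "transpose Q = Q"
  shows "S \<subseteq> perp Q T \<longleftrightarrow> T \<subseteq> perp Q S"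
  unfolding perp_def subset_iff mem_Collect_eq by (metis qf_commute[OF assms])

lemma set_plus_vec_cline: "set_plus_vec (cline a) (cline b) = vec.span {a, b}"
  unfolding set_plus_vec_def cline_def vec.span_insert vec.span_singleton
  by (auto simp: algebra_simps)

lemma dim_le_dim_inter_perp_singleton:
  assumes "vec.subspace S"
  shows "vec.dim S \<le> vec.dim (S \<inter> perp Q {a}) + 1"
proof (cases "S \<subseteq> perp Q {a}")
  case True
  then show ?thesis by (simp add: Int_absorb2)
next
  case False
  then obtain v where v: "v \<in> S" "qf Q a v \<noteq> 0"
    by (auto simp: perp_def)
  let ?K = "S \<inter> perp Q {a}"
  have "S \<subseteq> vec.span (insert v ?K)"
  proof
    fix x assume x: "x \<in> S"
    let ?t = "qf Q a x / qf Q a v"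
    have "x - ?t *s v \<in> ?K"
      using x v assms
      by (simp add: perp_def vec.subspace_diff vec.subspace_scale qf_diff_right qf_scale_right)
    then show "x \<in> vec.span (insert v ?K)"
      unfolding vec.span_insert by (blast intro: vec.span_base)
  qed
  then have "vec.dim S \<le> vec.dim (insert v ?K)"
    by (rule vec.dim_mono)
  also have "\<dots> \<le> vec.dim ?K + 1"
    by (simp add: vec.dim_insert)
  finally show ?thesis .
qed

lemma dim_le_dim_inter_perp:
  assumes "finite F" and "vec.subspace S"
  shows "vec.dim S \<le> vec.dim (S \<inter> perp Q F) + card F"
  using assms(1)
proof (induction F rule: finite_induct)
  case empty
  then show ?case by (simp add: perp_def)
next
  case (insert a F)
  have "vec.dim (S \<inter> perp Q F) \<le> vec.dim (S \<inter> perp Q F \<inter> perp Q {a}) + 1"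
    using assms(2) subspace_perp
    by (intro dim_le_dim_inter_perp_singleton vec.subspace_inter)
  moreover have "S \<inter> perp Q F \<inter> perp Q {a} = S \<inter> perp Q (insert a F)"
    by (auto simp: perp_def)
  ultimately show ?case
    using insert by simp
qed

lemma CARD_le_dim_perp_add_card:
  assumes "finite F"
  shows "CARD('n) \<le> vec.dim (perp Q F :: (complex^'n) set) + card F"
proof -
  have "vec.dim (UNIV :: (complex^'n) set) \<le> vec.dim (UNIV \<inter> perp Q F) + card F"
    by (rule dim_le_dim_inter_perp[OF assms vec.subspace_UNIV])
  then show ?thesis
    by (simp only: Int_UNIV_left vec_dim_card)
qed

lemma dim_add_dim_le_of_inter_eq_zero:
  assumes "vec.subspace S" "vec.subspace T" "vec.subspace U"
    and "S \<subseteq> U" "T \<subseteq> U" "S \<inter> T = {0}"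
  shows "vec.dim S + vec.dim T \<le> vec.dim U"
proof -
  have "{x + y |x y. x \<in> S \<and> y \<in> T} \<subseteq> U"
    using assms(3-5) vec.subspace_add by blast
  then have "vec.dim {x + y |x y. x \<in> S \<and> y \<in> T} \<le> vec.dim U"
    by (rule vec.dim_subset)
  then show ?thesis
    using vec.dim_sums_Int[OF assms(1,2)] assms(6) by simp
qed

text \<open>Extending a basis B of Y to a basis C of the whole space, perp B and perp (C - B)
  meet only in perp C = 0, and the latter has dimension at least card B.\<close>
lemma dim_perp_add_dim_le:
  fixes Y :: "(complex^'n) set"
  assumes "nondegenerate Q"
  shows "vec.dim (perp Q Y) + vec.dim Y \<le> CARD('n)"
proof -
  obtain B where B: "B \<subseteq> Y" "vec.independent B" "Y \<subseteq> vec.span B" "card B = vec.dim Y"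
    using vec.basis_exists by blast
  obtain C where C: "B \<subseteq> C" "vec.independent C" "vec.span C = UNIV"
    using vec.maximal_independent_subset_extend[OF subset_UNIV B(2)] by (metis top.extremum_uniqueI)
  have "finite C"
    using C(2) by (rule vec.finiteI_independent)
  moreover have "card C = CARD('n)"
    using vec.dim_eq_card_independent[OF C(2)] C(3) by (metis vec.dim_span vec_dim_card)
  ultimately have card_diff: "card (C - B) = CARD('n) - card B" and "card B \<le> CARD('n)"
    using C(1) by (simp_all add: card_Diff_subset finite_subset) (metis card_mono)
  have perp_Y: "perp Q Y = perp Q B"
    using perp_antimono[OF B(1)] perp_antimono[OF B(3)] by (auto simp: perp_span)
  have "perp Q B \<inter> perp Q (C - B) = perp Q C"
    using C(1) by (auto simp: perp_def)
  also have "\<dots> = {0}"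
    using perp_span[of Q C] C(3) perp_UNIV[OF assms] by simp
  finally have "vec.dim (perp Q B) + vec.dim (perp Q (C - B)) \<le> vec.dim (UNIV :: (complex^'n) set)"
    by (intro dim_add_dim_le_of_inter_eq_zero subspace_perp vec.subspace_UNIV) auto
  moreover have "CARD('n) \<le> vec.dim (perp Q (C - B)) + card (C - B)"
    using \<open>finite C\<close> by (intro CARD_le_dim_perp_add_card) simp
  moreover have "vec.dim (UNIV :: (complex^'n) set) = CARD('n)"
    by (rule vec_dim_card)
  ultimately show ?thesis
    unfolding perp_Y B(4)[symmetric] using card_diff \<open>card B \<le> CARD('n)\<close> by linarith
qed

lemma exists_non_orthogonal_in_perps:
  assumes "nondegenerate Q" and "finite F" "finite G"
    and "card F + card G < CARD('n)"
  shows "\<exists>w \<in> perp Q F. \<exists>w' \<in> perp Q (G :: (complex^'n) set). qf Q w w' \<noteq> 0"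
proof (rule ccontr)
  assume "\<not> ?thesis"
  then have "perp Q G \<subseteq> perp Q (perp Q F)"
    by (auto simp: perp_def)
  then have "perp Q F \<subseteq> perp Q (perp Q G)"
    using assms(1) perp_commute[of Q "perp Q G" "perp Q F"] by (simp add: nondegenerate_def)
  then have "vec.dim (perp Q F) \<le> vec.dim (perp Q (perp Q G))"
    by (rule vec.dim_subset)
  moreover have "vec.dim (perp Q (perp Q G)) + vec.dim (perp Q G) \<le> CARD('n)"
    using assms(1) by (rule dim_perp_add_dim_le)
  ultimately show False
    using CARD_le_dim_perp_add_card[OF assms(2), of Q] CARD_le_dim_perp_add_card[OF assms(3), of Q]
      assms(4) by linarith
qed

lemma subset_perp_if_isotropic:
  assumes "transpose Q = Q" and "vec.subspace S" and "\<forall>w \<in> S. qf Q w w = 0"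
  shows "S \<subseteq> perp Q S"
proof (intro subsetI perpI)
  fix x y assume "x \<in> S" "y \<in> S"
  then have "qf Q (x + y) (x + y) = 0" "qf Q x x = 0" "qf Q y y = 0"
    using assms(2,3) vec.subspace_add by blast+
  then have "2 * qf Q x y = 0"
    using qf_commute[OF assms(1), of y x] by (simp add: qf_add_left qf_add_right)
  then show "qf Q y x = 0"
    using qf_commute[OF assms(1), of y x] by simp
qed

lemma dim_span_hyperbolic_pair:
  assumes "qf Q a a = 0" and "qf Q a b \<noteq> 0"
  shows "vec.dim (vec.span {a, b}) = 2"
proof -
  have "b \<notin> vec.span {a}"
    using assms by (auto simp: vec.span_singleton qf_scale_right)
  moreover have "a \<noteq> 0"
    using assms(2) by auto
  ultimately have "vec.dim (insert b {a}) = 2"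
    by (auto simp: vec.dim_insert)
  then show ?thesis
    by (metis insert_commute vec.dim_span)
qed

lemma span_hyperbolic_pair_inter_perp:
  assumes "transpose Q = Q" and "qf Q a a = 0" "qf Q b b = 0" "qf Q a b \<noteq> 0"
  shows "vec.span {a, b} \<inter> perp Q {a, b} = {0}"
proof -
  have "x = 0" if "x \<in> vec.span {a, b}" "x \<in> perp Q {a, b}" for x
  proof -
    obtain s t where x: "x = s *s a + t *s b"
      using \<open>x \<in> vec.span {a, b}\<close>
      unfolding vec.span_insert vec.span_singleton by (auto simp: algebra_simps)
    have "qf Q a x = t * qf Q a b" "qf Q b x = s * qf Q a b"
      using assms qf_commute[OF assms(1), of b a] by (simp_all add: x qf_add_right qf_scale_right)
    then have "s = 0" "t = 0"
      using \<open>x \<in> perp Q {a, b}\<close> assms(4) by (auto simp: perp_def)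
    then show ?thesis
      by (simp add: x)
  qed
  then show ?thesis
    using vec.span_zero subspace_perp[of Q "{a, b}"] vec.subspace_0 by auto
qed

lemma exists_anisotropic_in_perp:
  assumes "nondegenerate Q" and "finite F" and "a \<in> F" "b \<in> F"
    and "qf Q a a = 0" "qf Q b b = 0" "qf Q a b \<noteq> 0"
    and "2 * card F < CARD('n) + 2"
  shows "\<exists>w \<in> perp Q (F :: (complex^'n) set). qf Q w w \<noteq> 0"
proof (rule ccontr)
  assume "\<not> ?thesis"
  then have isotropic: "\<forall>w \<in> perp Q F. qf Q w w = 0"
    by blast
  let ?S = "perp Q F" and ?T = "vec.span {a, b}"
  have sym: "transpose Q = Q"
    using assms(1) by (simp add: nondegenerate_def)
  have S_perp_ab: "?S \<subseteq> perp Q {a, b}"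
    using assms(3,4) by (intro perp_antimono) auto
  have "?S \<subseteq> perp Q ?S"
    using isotropic by (intro subset_perp_if_isotropic sym subspace_perp)
  moreover have "?T \<subseteq> perp Q ?S"
    using S_perp_ab perp_commute[OF sym] by (simp add: perp_span)
  moreover have "?S \<inter> ?T = {0}"
    using S_perp_ab span_hyperbolic_pair_inter_perp[OF sym assms(5-7)] vec.span_zero
      subspace_perp vec.subspace_0 by blast
  ultimately have "vec.dim ?S + vec.dim ?T \<le> vec.dim (perp Q ?S)"
    by (intro dim_add_dim_le_of_inter_eq_zero subspace_perp vec.subspace_span)
  then show False
    using dim_span_hyperbolic_pair[OF assms(5,7)] dim_perp_add_dim_le[OF assms(1), of ?S]
      CARD_le_dim_perp_add_card[OF assms(2), of Q] assms(8) by linarith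
qed

lemma wedge_eq: "wedge Q v w = (\<chi> i k. v$i * (Q *v w)$k - w$i * (Q *v v)$k)"
  by (simp add: wedge_def matrix_vector_mult_def)

lemma wedge_self [simp]: "wedge Q v v = 0"
  by (simp add: wedge_def vec_eq_iff)

lemma wedge_mult:
  "wedge Q a b ** wedge Q c d =
    (\<chi> i k. qf Q c b * a$i * (Q *v d)$k - qf Q d b * a$i * (Q *v c)$k
          - qf Q c a * b$i * (Q *v d)$k + qf Q d a * b$i * (Q *v c)$k)"
  by (simp add: vec_eq_iff wedge_eq matrix_matrix_mult_def qf_eq_sum_matrix_vector_mult
      left_diff_distrib right_diff_distrib sum_subtractf sum_distrib_left sum_distrib_right mult_ac)

lemma wedge_commutator:
  assumes "transpose Q = Q"
  shows "wedge Q a b ** wedge Q c d - wedge Q c d ** wedge Q a b =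
    (\<chi> i k. qf Q b c * wedge Q a d $ i $ k - qf Q b d * wedge Q a c $ i $ k
          - qf Q a c * wedge Q b d $ i $ k + qf Q a d * wedge Q b c $ i $ k)"
  unfolding wedge_mult
  by (simp add: vec_eq_iff wedge_eq algebra_simps qf_commute[OF assms, of c b]
      qf_commute[OF assms, of d b] qf_commute[OF assms, of c a] qf_commute[OF assms, of d a])

lemma r_alg_cline: "r_alg Q (cline l) u = {wedge Q u w | w. w \<in> perp Q {l, u}}"
  by (simp add: r_alg_def set_plus_vec_cline perp_span)

lemma lie_subalg_scale_cancel:
  assumes "lie_subalg Q H" and "c \<noteq> 0" and "(\<chi> i j. c * A$i$j) \<in> H"
  shows "A \<in> H"
proof -
  have "(\<chi> i j. inverse c * (\<chi> i j. c * A$i$j)$i$j) \<in> H"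
    using assms(1,3) unfolding lie_subalg_def by blast
  moreover have "(\<chi> i j. inverse c * (\<chi> i j. c * A$i$j)$i$j) = A"
    using assms(2) by (simp add: vec_eq_iff)
  ultimately show ?thesis
    by simp
qed

lemma wedge_mem_lie_subalg_of_commutator:
  assumes "lie_subalg Q H" and "transpose Q = Q"
    and "wedge Q a b \<in> H" "wedge Q c d \<in> H"
    and "qf Q b c = 0" "qf Q a d = 0" "qf Q a c = 0 \<or> b = d" "qf Q b d \<noteq> 0"
  shows "wedge Q a c \<in> H"
proof -
  have mem: "wedge Q a b ** wedge Q c d - wedge Q c d ** wedge Q a b \<in> H"
    using assms(1,3,4) unfolding lie_subalg_def by blast
  have eq: "wedge Q a b ** wedge Q c d - wedge Q c d ** wedge Q a b =
      (\<chi> i k. - qf Q b d * wedge Q a c $ i $ k)"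
  proof -
    have "qf Q a c * wedge Q b d $ i $ k = 0" for i k
      using assms(7) by auto
    then show ?thesis
      by (simp add: wedge_commutator[OF assms(2)] vec_eq_iff assms(5,6))
  qed
  show ?thesis
    using assms(8) by (intro lie_subalg_scale_cancel[OF assms(1) _ mem[unfolded eq]]) simp
qed

theorem lemma5p6:
  fixes Q :: "complex^'n^'n" and L1 L2 :: "(complex^'n) set" and u1 u2 :: "complex^'n"
    and H :: "(complex^'n^'n) set"
  assumes "CARD('n) \<ge> 7"
    and "nondegenerate Q"
    and "is_line L1" and "is_line L2"
    and "u1 \<noteq> 0" and "u1 \<in> perp Q L1" and "qf Q u1 u1 = 0"
    and "dim_is_2 (set_plus_vec L1 (cline u1))"
    and "u2 \<noteq> 0" and "u2 \<in> perp Q L2" and "qf Q u2 u2 = 0"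
    and "dim_is_2 (set_plus_vec L2 (cline u2))"
    and "lie_subalg Q H"
    and "r_alg Q L1 u1 \<subseteq> H" and "r_alg Q L2 u2 \<subseteq> H"
  shows "wedge Q u1 u2 \<in> H"
proof -
  have sym: "transpose Q = Q"
    using assms(2) by (simp add: nondegenerate_def)
  obtain l1 l2 where L: "L1 = cline l1" "L2 = cline l2"
    using assms(3,4) unfolding is_line_def by blast
  have r1: "wedge Q u1 w \<in> H" if "w \<in> perp Q {l1, u1, u2}" for w
    using assms(14) that perp_antimono[of "{l1, u1}" "{l1, u1, u2}" Q] by (auto simp: L r_alg_cline)
  have r2: "wedge Q u2 w \<in> H" if "w \<in> perp Q {l2, u1, u2}" for w
    using assms(15) that perp_antimono[of "{l2, u2}" "{l2, u1, u2}" Q] by (auto simp: L r_alg_cline)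
  have key: "wedge Q u1 u2 \<in> H"
    if "w \<in> perp Q {l1, u1, u2}" "w' \<in> perp Q {l2, u1, u2}"
      "qf Q u1 u2 = 0 \<or> w = w'" "qf Q w w' \<noteq> 0" for w w'
    using that
    by (intro wedge_mem_lie_subalg_of_commutator[OF assms(13) sym r1 r2])
      (auto simp: perp_def qf_commute[OF sym, of w u2])
  show ?thesis
  proof (cases "qf Q u1 u2 = 0")
    case True
    have "card {l1, u1, u2} \<le> 3" "card {l2, u1, u2} \<le> 3"
      by (auto simp: card_insert_if)
    then obtain w w' where "w \<in> perp Q {l1, u1, u2}" "w' \<in> perp Q {l2, u1, u2}" "qf Q w w' \<noteq> 0"
      using assms(1) exists_non_orthogonal_in_perps[OF assms(2), of "{l1, u1, u2}" "{l2, u1, u2}"]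
      by auto
    then show ?thesis
      using key True by blast
  next
    case False
    have "card {l1, u1, l2, u2} \<le> 4"
      by (auto simp: card_insert_if)
    then obtain w where "w \<in> perp Q {l1, u1, l2, u2}" "qf Q w w \<noteq> 0"
      using assms(1) exists_anisotropic_in_perp[OF assms(2), of "{l1, u1, l2, u2}" u1 u2]
        assms(7,11) False by auto
    then show ?thesis
      using key[of w w] by (auto simp: perp_def)
  qed
qed

end
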